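(* Let $r\ge 0$ and $n\ge 3r+1$ be integers, and let $F$ be a set of $r$ pairwise disjoint (independent) edges of the complete graph $K_n$. Then $m(K_n\setminus F)=r+2$, where $K_n\setminus F$ is the graph obtained from $K_n$ by deleting the edges in $F$.
   Context: All graphs are finite, simple and undirected. A list assignment $L$ for a graph $G$ assigns to each vertex $v$ a set $L(v)$ of colors; an $L$-coloring is a proper vertex coloring $c$ of $G$ with $c(v)\in L(v)$ for every vertex $v$. A $k$-list assignment is a list assignment with $|L(v)|=k$ for all $v$. $G$ is uniquely $k$-list colorable (U$k$LC) if there exists a $k$-list assignment $L$ such that $G$ has exactly one $L$-coloring. $G$ has property $M(k)$ if it is not U$k$LC, i.e. for every $k$-list assignment $L$, $G$ has either no $L$-coloring or at least two $L$-colorings. The m-number $m(G)$ is the least integer $k\ge 1$ such that $G$ has property $M(k)$. (Every U$k$LC graph is also U$(k-1)$LC, so $G$ is U$k$LC iff $k<m(G)$.) *)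

theory Defs
  imports Main "HOL-Library.FuncSet"
begin

definition is_L_coloring :: "'a set \<Rightarrow> ('a \<Rightarrow> 'a \<Rightarrow> bool) \<Rightarrow> ('a \<Rightarrow> nat set) \<Rightarrow> ('a \<Rightarrow> nat) \<Rightarrow> bool" where
  "is_L_coloring V E L c \<longleftrightarrow>
     c \<in> extensional V \<and> (\<forall>v\<in>V. c v \<in> L v) \<and> (\<forall>u\<in>V. \<forall>v\<in>V. E u v \<longrightarrow> c u \<noteq> c v)"

definition k_list_assignment :: "'a set \<Rightarrow> nat \<Rightarrow> ('a \<Rightarrow> nat set) \<Rightarrow> bool" where
  "k_list_assignment V k L \<longleftrightarrow> (\<forall>v\<in>V. finite (L v) \<and> card (L v) = k)"

definition uniquely_k_list_colorable :: "'a set \<Rightarrow> ('a \<Rightarrow> 'a \<Rightarrow> bool) \<Rightarrow> nat \<Rightarrow> bool" where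
  "uniquely_k_list_colorable V E k \<longleftrightarrow>
     (\<exists>L. k_list_assignment V k L \<and> (\<exists>!c. is_L_coloring V E L c))"

definition has_property_M :: "'a set \<Rightarrow> ('a \<Rightarrow> 'a \<Rightarrow> bool) \<Rightarrow> nat \<Rightarrow> bool" where
  "has_property_M V E k \<longleftrightarrow> \<not> uniquely_k_list_colorable V E k"

definition m_number :: "'a set \<Rightarrow> ('a \<Rightarrow> 'a \<Rightarrow> bool) \<Rightarrow> nat" where
  "m_number V E = (LEAST k. k \<ge> 1 \<and> has_property_M V E k)"

definition Kn_minus :: "nat \<Rightarrow> nat set set \<Rightarrow> nat \<Rightarrow> nat \<Rightarrow> bool" where
  "Kn_minus n F u v \<longleftrightarrow> u < n \<and> v < n \<and> u \<noteq> v \<and> {u, v} \<notin> F"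

end

theory Submission
  imports Defs
begin

text \<open>
  Upper bound. Let \<open>c\<close> be the only coloring from an \<open>(r + 2)\<close>-list assignment \<open>L\<close>. Every
  color of every list is used by \<open>c\<close>, otherwise one vertex could be recolored. Two vertices of
  the same color span an edge of \<open>F\<close>, so at most \<open>r\<close> colors are shared, and since \<open>n > 2r\<close>
  some vertices carry an unshared color. For such a vertex \<open>v\<close> the \<open>r + 1\<close> colors of
  \<open>L v - {c v}\<close> cannot all be shared, so one of them is the unshared color of another such
  vertex. This successor map is a permutation of some nonempty set of such vertices, and
  permuting their colors along it gives a second coloring.

  Lower bound, \<open>1 \<le> k \<le> r + 1\<close>. Colors are vertices. An edge \<open>{a, b}\<close> of \<open>F\<close> with \<open>a < b\<close> gets
  the lists \<open>{a} \<union> A\<close> and \<open>{a} \<union> B\<close> with \<open>A \<inter> B = {}\<close>, an unmatched vertex \<open>v\<close> the list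
  \<open>{v} \<union> Q\<close> with \<open>Q\<close> a set of smaller ends. No list contains a larger end, so only \<open>n - r\<close>
  colors are available, while a coloring with a non-monochromatic edge of \<open>F\<close> uses more.
  This forces both ends of every edge to the color \<open>a\<close>, and then every unmatched vertex
  to its own name. The condition \<open>n \<ge> 3r + 1\<close> leaves room for the disjoint sets \<open>A\<close>, \<open>B\<close>.
\<close>

lemma finite_self_map_invariant_subset:
  assumes "finite T" "T \<noteq> {}" "f ` T \<subseteq> T"
  obtains C where "C \<subseteq> T" "C \<noteq> {}" "f ` C = C"
proof -
  define closed where "closed C \<longleftrightarrow> C \<subseteq> T \<and> C \<noteq> {} \<and> f ` C \<subseteq> C" for C
  obtain C where C: "closed C" and least: "\<And>D. closed D \<Longrightarrow> card C \<le> card D"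
    using ex_has_least_nat[of closed T card] assms unfolding closed_def by blast
  have "finite C" using C \<open>finite T\<close> finite_subset unfolding closed_def by blast
  moreover have "closed (f ` C)" using C unfolding closed_def by blast
  ultimately have "f ` C = C" using C least card_subset_eq unfolding closed_def by (metis le_antisym card_mono)
  then show thesis using C that unfolding closed_def by blast
qed

lemma unique_L_coloring_covers_lists:
  assumes col: "is_L_coloring V E L c"
    and uniq: "\<And>c'. is_L_coloring V E L c' \<Longrightarrow> c' = c"
    and "v \<in> V" "y \<in> L v"
  shows "y \<in> c ` V"
proof (rule ccontr)
  assume y: "y \<notin> c ` V"
  have "is_L_coloring V E L (c(v := y))"
    using col assms(3,4) y unfolding is_L_coloring_def extensional_def by auto
  then have "c(v := y) = c" by (rule uniq)
  then have "c v = y" by (metis fun_upd_same)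
  then show False using y \<open>v \<in> V\<close> by blast
qed

lemma L_coloring_permute_unshared_colors:
  assumes col: "is_L_coloring V E L c"
    and "C \<subseteq> V" "finite C" "f ` C = C"
    and unshared: "\<And>u w. u \<in> C \<Longrightarrow> w \<in> V \<Longrightarrow> c w = c u \<Longrightarrow> w = u"
    and fL: "\<And>u. u \<in> C \<Longrightarrow> c (f u) \<in> L u"
  shows "is_L_coloring V E L (\<lambda>u. if u \<in> C then c (f u) else c u)"
proof -
  have inj: "inj_on f C" using finite_surj_inj \<open>finite C\<close> \<open>f ` C = C\<close> by blast
  have fC: "f u \<in> C" if "u \<in> C" for u using that \<open>f ` C = C\<close> by blast
  show ?thesis
    unfolding is_L_coloring_def
  proof (intro conjI ballI impI)
    show "(\<lambda>u. if u \<in> C then c (f u) else c u) \<in> extensional V"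
      using col \<open>C \<subseteq> V\<close> unfolding is_L_coloring_def extensional_def by auto
    show "(if u \<in> C then c (f u) else c u) \<in> L u" if "u \<in> V" for u
      using col fL that unfolding is_L_coloring_def by auto
    fix u w assume uw: "u \<in> V" "w \<in> V" "E u w"
    then have "c u \<noteq> c w" using col unfolding is_L_coloring_def by blast
    have "u \<noteq> w" using \<open>c u \<noteq> c w\<close> by blast
    consider "u \<in> C" "w \<in> C" | "u \<in> C" "w \<notin> C" | "u \<notin> C" "w \<in> C" | "u \<notin> C" "w \<notin> C"
      by blast
    then show "(if u \<in> C then c (f u) else c u) \<noteq> (if w \<in> C then c (f w) else c w)"
    proof cases
      case 1
      then have "f u \<noteq> f w" using inj \<open>u \<noteq> w\<close> by (meson inj_on_contraD)
      then show ?thesis using 1 fC unshared[of "f u" "f w"] \<open>C \<subseteq> V\<close> by (auto simp: subset_iff)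
    next
      case 2
      then show ?thesis using fC unshared[of "f u" w] uw by auto
    next
      case 3
      then show ?thesis using fC unshared[of "f w" u] uw by auto
    qed (use \<open>c u \<noteq> c w\<close> in simp)
  qed
qed

lemma unique_L_coloring_no_unshared_successors:
  assumes col: "is_L_coloring V E L c"
    and uniq: "\<And>c'. is_L_coloring V E L c' \<Longrightarrow> c' = c"
    and "finite T" "T \<noteq> {}" "T \<subseteq> V"
    and unshared: "\<And>u w. u \<in> T \<Longrightarrow> w \<in> V \<Longrightarrow> c w = c u \<Longrightarrow> w = u"
    and successor: "\<And>v. v \<in> T \<Longrightarrow> \<exists>w\<in>T. w \<noteq> v \<and> c w \<in> L v"
  shows False
proof -
  obtain f where f: "\<And>v. v \<in> T \<Longrightarrow> f v \<in> T \<and> f v \<noteq> v \<and> c (f v) \<in> L v"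
    using successor by metis
  obtain C where C: "C \<subseteq> T" "C \<noteq> {}" "f ` C = C"
    using finite_self_map_invariant_subset[of T f] assms(3,4) f by blast
  have "is_L_coloring V E L (\<lambda>u. if u \<in> C then c (f u) else c u)"
    using C assms(3,5) f unshared
    by (intro L_coloring_permute_unshared_colors[OF col]) (auto intro: finite_subset)
  then have recolored: "(\<lambda>u. if u \<in> C then c (f u) else c u) = c" by (rule uniq)
  obtain x where "x \<in> C" using C by blast
  then have "c (f x) = c x" using fun_cong[OF recolored, of x] by simp
  then show False using unshared f \<open>x \<in> C\<close> C assms(5) by blast
qed

lemma m_number_eqI:
  assumes "1 \<le> k" "has_property_M V E k"
    and "\<And>j. 1 \<le> j \<Longrightarrow> j < k \<Longrightarrow> uniquely_k_list_colorable V E j"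
  shows "m_number V E = k"
  unfolding m_number_def
proof (rule Least_equality)
  show "1 \<le> k \<and> has_property_M V E k" using assms(1,2) by simp
  fix j assume "1 \<le> j \<and> has_property_M V E j"
  then show "k \<le> j" using assms(3) unfolding has_property_M_def by (meson not_le)
qed

lemma Kn_minus_same_color_imp_edge:
  assumes "is_L_coloring {..<n} (Kn_minus n F) L c" "u < n" "v < n" "u \<noteq> v" "c u = c v"
  shows "{u, v} \<in> F"
  using assms unfolding is_L_coloring_def Kn_minus_def by auto

lemma card_Union_le_twice_card:
  assumes "\<forall>e\<in>F. card e = 2"
  shows "card (\<Union>F) \<le> 2 * card F"
proof -
  have "card (\<Union>F) \<le> sum card F" by (rule card_Union_le_sum_card)
  also have "\<dots> = 2 * card F" using assms by simp
  finally show ?thesis .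
qed

lemma Kn_minus_shared_colors_subset_Union:
  assumes "is_L_coloring {..<n} (Kn_minus n F) L c"
  shows "{v. v < n \<and> (\<exists>w<n. w \<noteq> v \<and> c w = c v)} \<subseteq> \<Union>F"
proof
  fix v assume "v \<in> {v. v < n \<and> (\<exists>w<n. w \<noteq> v \<and> c w = c v)}"
  then obtain w where "v < n" "w < n" "v \<noteq> w" "c v = c w" by auto
  then have "{v, w} \<in> F" by (rule Kn_minus_same_color_imp_edge[OF assms])
  then show "v \<in> \<Union>F" by blast
qed

lemma Kn_minus_card_shared_colors:
  assumes "is_L_coloring {..<n} (Kn_minus n F) L c" "finite F"
  shows "card (c ` {v. v < n \<and> (\<exists>w<n. w \<noteq> v \<and> c w = c v)}) \<le> card F"
proof -
  have "c ` {v. v < n \<and> (\<exists>w<n. w \<noteq> v \<and> c w = c v)} \<subseteq> (\<lambda>e. c (Min e)) ` F"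
  proof
    fix b assume "b \<in> c ` {v. v < n \<and> (\<exists>w<n. w \<noteq> v \<and> c w = c v)}"
    then obtain v w where b: "b = c v" and vw: "v < n" "w < n" "v \<noteq> w" "c v = c w" by auto
    have "{v, w} \<in> F" using vw by (rule Kn_minus_same_color_imp_edge[OF assms(1)])
    moreover have "b = c (Min {v, w})"
      using Min_in[of "{v, w}"] b vw(4) by auto
    ultimately show "b \<in> (\<lambda>e. c (Min e)) ` F" by (rule rev_image_eqI)
  qed
  then have "card (c ` {v. v < n \<and> (\<exists>w<n. w \<noteq> v \<and> c w = c v)}) \<le> card ((\<lambda>e. c (Min e)) ` F)"
    using \<open>finite F\<close> by (intro card_mono) auto
  also have "\<dots> \<le> card F" using \<open>finite F\<close> by (rule card_image_le)
  finally show ?thesis .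
qed

lemma Kn_minus_has_property_M:
  assumes edges: "\<forall>e\<in>F. card e = 2" and "finite F" and n: "2 * card F < n"
  shows "has_property_M {..<n} (Kn_minus n F) (card F + 2)"
  unfolding has_property_M_def uniquely_k_list_colorable_def
proof
  let ?V = "{..<n}" and ?E = "Kn_minus n F"
  assume "\<exists>L. k_list_assignment ?V (card F + 2) L \<and> (\<exists>!c. is_L_coloring ?V ?E L c)"
  then obtain L c where kL: "k_list_assignment ?V (card F + 2) L" and col: "is_L_coloring ?V ?E L c"
    and uniq: "\<And>c'. is_L_coloring ?V ?E L c' \<Longrightarrow> c' = c"
    by metis
  define S where "S = {v. v < n \<and> (\<exists>w<n. w \<noteq> v \<and> c w = c v)}"
  define T where "T = ?V - S"
  have "finite (\<Union>F)" using \<open>finite F\<close> edges by (metis card.infinite finite_Union zero_neq_numeral)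
  then have "card S \<le> card (\<Union>F)"
    using Kn_minus_shared_colors_subset_Union[OF col] unfolding S_def by (rule card_mono)
  have "finite S" unfolding S_def by simp
  have "T \<noteq> {}"
  proof
    assume "T = {}"
    then have "card ?V \<le> card S" using \<open>finite S\<close> unfolding T_def by (intro card_mono) auto
    then show False using \<open>card S \<le> card (\<Union>F)\<close> card_Union_le_twice_card[OF edges] n by simp
  qed
  moreover have "\<exists>w\<in>T. w \<noteq> v \<and> c w \<in> L v" if "v \<in> T" for v
  proof -
    have v: "v < n" "c v \<in> L v" using that col unfolding T_def is_L_coloring_def by auto
    then have "card (L v - {c v}) = card F + 1"
      using kL unfolding k_list_assignment_def by simp
    moreover have "card (L v - {c v}) \<le> card (c ` S)" if "L v - {c v} \<subseteq> c ` S"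
      using that \<open>finite S\<close> by (intro card_mono) auto
    ultimately have "\<not> L v - {c v} \<subseteq> c ` S"
      using Kn_minus_card_shared_colors[OF col \<open>finite F\<close>] unfolding S_def by linarith
    then obtain b where b: "b \<in> L v" "b \<noteq> c v" "b \<notin> c ` S" by blast
    then obtain w where "w < n" "c w = b"
      using unique_L_coloring_covers_lists[OF col uniq] v by blast
    moreover have "w \<in> T" using \<open>w < n\<close> \<open>c w = b\<close> b(3) unfolding T_def by blast
    ultimately show ?thesis using b(1,2) by (intro bexI[of _ w]) auto
  qed
  moreover have "finite T" "T \<subseteq> ?V" unfolding T_def by auto
  moreover have "w = u" if "u \<in> T" "w \<in> ?V" "c w = c u" for u w
    using that unfolding T_def S_def by blast
  ultimately show False using unique_L_coloring_no_unshared_successors[OF col uniq] by blast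
qed

lemma obtain_disjoint_subsets_with_card:
  assumes "2 * m \<le> card S"
  obtains A B where "A \<subseteq> S" "B \<subseteq> S" "A \<inter> B = {}" "card A = m" "card B = m"
proof -
  obtain D where D: "D \<subseteq> S" "card D = 2 * m" "finite D"
    using obtain_subset_with_card_n[OF assms] by metis
  obtain A where A: "A \<subseteq> D" "card A = m"
    using obtain_subset_with_card_n[of m D] D(2) by auto
  have "card (D - A) = m" using A D by (simp add: card_Diff_subset finite_subset)
  then show thesis using that[of A "D - A"] A D by blast
qed

locale Kn_matching =
  fixes n :: nat and F :: "nat set set"
  assumes edges: "\<forall>e\<in>F. \<exists>u v. u < n \<and> v < n \<and> u \<noteq> v \<and> e = {u, v}"
    and disjoint: "\<forall>e\<in>F. \<forall>e'\<in>F. e \<noteq> e' \<longrightarrow> e \<inter> e' = {}"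
    and finite_F: "finite F"
begin


lemma edge_Min_Max:
  assumes "e \<in> F"
  shows "e = {Min e, Max e}" "Min e < Max e" "Max e < n"
proof -
  obtain u v where "u < n" "v < n" "u \<noteq> v" "e = {u, v}" using edges assms by blast
  then show "e = {Min e, Max e}" "Min e < Max e" "Max e < n"
    by (cases "u < v"; auto simp: insert_commute)+
qed

lemma Min_in_edge: "e \<in> F \<Longrightarrow> Min e \<in> e" and Max_in_edge: "e \<in> F \<Longrightarrow> Max e \<in> e"
  using edge_Min_Max(1) by (metis insertI1, metis insertCI)

lemma edge_unique: "e \<in> F \<Longrightarrow> e' \<in> F \<Longrightarrow> v \<in> e \<Longrightarrow> v \<in> e' \<Longrightarrow> e = e'"
  using disjoint by blast

lemma inj_on_Min: "inj_on Min F"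
  by (rule inj_onI) (metis Min_in_edge edge_unique)

lemma inj_on_Max: "inj_on Max F"
  by (rule inj_onI) (metis Max_in_edge edge_unique)

lemma Min_notin_Max_image: "e \<in> F \<Longrightarrow> Min e \<notin> Max ` F"
  by (metis Max_in_edge Min_in_edge edge_Min_Max(2) edge_unique imageE less_irrefl)

lemma Union_edges: "\<Union>F = Min ` F \<union> Max ` F"
  using edge_Min_Max(1) by blast

definition edge_of :: "nat \<Rightarrow> nat set" where
  "edge_of v = (THE e. e \<in> F \<and> v \<in> e)"

lemma edge_of_eq: "e \<in> F \<Longrightarrow> v \<in> e \<Longrightarrow> edge_of v = e"
  unfolding edge_of_def by (rule the_equality) (use edge_unique in blast)+

definition forced_color :: "nat \<Rightarrow> nat" where
  "forced_color v = (if v \<in> \<Union>F then Min (edge_of v) else v)"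

lemma forced_color_unmatched: "v \<notin> \<Union>F \<Longrightarrow> forced_color v = v"
  unfolding forced_color_def by simp

lemma forced_color_in_edge: "e \<in> F \<Longrightarrow> v \<in> e \<Longrightarrow> forced_color v = Min e"
  unfolding forced_color_def using edge_of_eq by auto

lemma forced_color_eq_Min_iff:
  assumes "e \<in> F"
  shows "forced_color v = Min e \<longleftrightarrow> v \<in> e"
proof
  assume eq: "forced_color v = Min e"
  show "v \<in> e"
  proof (cases "v \<in> \<Union>F")
    case True
    then obtain e' where "e' \<in> F" "v \<in> e'" by blast
    then show ?thesis using eq forced_color_in_edge assms inj_on_Min by (metis inj_onD)
  next
    case False
    then show ?thesis using eq forced_color_unmatched assms Min_in_edge by auto
  qed
qed (use assms forced_color_in_edge in blast)

lemma forced_color_eq_imp_edge: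
  assumes "u \<noteq> v" "forced_color u = forced_color v"
  shows "{u, v} \<in> F"
proof -
  have *: "{u, v} \<in> F" if "u \<noteq> v" "forced_color u = forced_color v" "u \<in> \<Union>F" for u v
  proof -
    obtain e where e: "e \<in> F" "u \<in> e" using \<open>u \<in> \<Union>F\<close> by blast
    then have "v \<in> e" using that forced_color_in_edge forced_color_eq_Min_iff by metis
    then have "e = {u, v}" using e \<open>u \<noteq> v\<close> edge_Min_Max(1) by (metis doubleton_eq_iff insertE singletonD)
    then show ?thesis using e by simp
  qed
  show ?thesis
    using *[of u v] *[of v u] assms forced_color_unmatched by (metis insert_commute)
qed

definition palette :: "nat set" where
  "palette = {..<n} - Max ` F"

lemma card_palette: "card palette = card {..<n} - card F"
proof -
  have "Max ` F \<subseteq> {..<n}" using edge_Min_Max(3) by auto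
  then show ?thesis
    unfolding palette_def using card_image[OF inj_on_Max] by (simp add: card_Diff_subset finite_subset)
qed

lemma Min_in_palette: "e \<in> F \<Longrightarrow> Min e \<in> palette"
  unfolding palette_def using Min_notin_Max_image edge_Min_Max(2,3) by fastforce

lemma forced_color_in_palette:
  assumes "v < n"
  shows "forced_color v \<in> palette"
proof (cases "v \<in> \<Union>F")
  case True
  then show ?thesis using forced_color_in_edge Min_in_palette by (metis UnionE)
next
  case False
  then have "v \<notin> Max ` F" using Max_in_edge by blast
  then show ?thesis using False assms forced_color_unmatched unfolding palette_def by simp
qed

definition forcing_lists :: "(nat \<Rightarrow> nat set) \<Rightarrow> bool" where
  "forcing_lists L \<longleftrightarrow>
     (\<forall>v<n. forced_color v \<in> L v \<and> L v \<subseteq> palette) \<and>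
     (\<forall>e\<in>F. L (Min e) \<inter> L (Max e) = {Min e}) \<and>
     (\<forall>v<n. v \<notin> \<Union>F \<longrightarrow> L v \<subseteq> insert v (Min ` F))"

lemma forced_color_L_coloring:
  assumes "forcing_lists L"
  shows "is_L_coloring {..<n} (Kn_minus n F) L (restrict forced_color {..<n})"
  using assms forced_color_eq_imp_edge unfolding forcing_lists_def is_L_coloring_def Kn_minus_def
  by auto

lemma L_coloring_edges_monochromatic:
  assumes col: "is_L_coloring {..<n} (Kn_minus n F) L c"
    and few_colors: "card (c ` {..<n}) \<le> n - card F"
    and "e \<in> F"
  shows "c (Min e) = c (Max e)"
proof (rule ccontr)
  assume "c (Min e) \<noteq> c (Max e)"
  define monochromatic where "monochromatic = {e \<in> F. c (Min e) = c (Max e)}"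
  define S where "S = {..<n} - Max ` monochromatic"
  have "monochromatic \<subseteq> F - {e}" unfolding monochromatic_def using \<open>c (Min e) \<noteq> c (Max e)\<close> by auto
  then have "card (Max ` monochromatic) < card F"
    using \<open>e \<in> F\<close> finite_F card_image_le[of monochromatic Max]
    by (metis card_Diff1_less card_mono finite_Diff le_less_trans finite_subset)
  moreover have "Max ` monochromatic \<subseteq> {..<n}" using edge_Min_Max(3) unfolding monochromatic_def by auto
  moreover have "card F \<le> n"
    using card_image[OF inj_on_Max] edge_Min_Max(3)
    by (metis card_lessThan card_mono finite_lessThan image_subsetI lessThan_iff)
  ultimately have "n - card F < card S" unfolding S_def
    by (simp add: card_Diff_subset finite_subset)
  moreover have "inj_on c S"
  proof (rule inj_onI, rule ccontr)
    fix a b assume ab: "a \<in> S" "b \<in> S" "c a = c b" "a \<noteq> b"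
    then have e': "{a, b} \<in> F" using Kn_minus_same_color_imp_edge[OF col] unfolding S_def by auto
    then have "{a, b} = {Min {a, b}, Max {a, b}}" by (rule edge_Min_Max(1))
    then have "{a, b} \<in> monochromatic" "Max {a, b} \<in> {a, b}"
      using e' ab(3) unfolding monochromatic_def by (auto simp: doubleton_eq_iff)
    then show False using ab(1,2) unfolding S_def by (metis DiffD2 image_eqI insertE singletonD)
  qed
  then have "card S \<le> card (c ` {..<n})"
    unfolding S_def by (metis card_image card_mono Diff_subset finite_imageI finite_lessThan image_mono)
  ultimately show False using few_colors by linarith
qed

lemma forcing_lists_edge_color:
  assumes "forcing_lists L" and col: "is_L_coloring {..<n} (Kn_minus n F) L c" and "e \<in> F"
  shows "c (Min e) = Min e" "c (Max e) = Min e"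
proof -
  have cL: "c u \<in> L u" if "u < n" for u using col that unfolding is_L_coloring_def by simp
  have "c ` {..<n} \<subseteq> palette" using cL \<open>forcing_lists L\<close> unfolding forcing_lists_def by blast
  then have "card (c ` {..<n}) \<le> n - card F"
    using card_mono[of palette] card_palette unfolding palette_def by simp
  then have "c (Min e) = c (Max e)" by (rule L_coloring_edges_monochromatic[OF col _ \<open>e \<in> F\<close>])
  moreover have "L (Min e) \<inter> L (Max e) = {Min e}"
    using \<open>forcing_lists L\<close> \<open>e \<in> F\<close> unfolding forcing_lists_def by blast
  moreover have "Min e < n" "Max e < n" using edge_Min_Max(2,3)[OF \<open>e \<in> F\<close>] by auto
  ultimately show "c (Min e) = Min e" "c (Max e) = Min e" using cL by (metis IntI singletonD)+
qed

lemma L_coloring_eq_forced_color: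
  assumes "forcing_lists L" and col: "is_L_coloring {..<n} (Kn_minus n F) L c"
  shows "c = restrict forced_color {..<n}"
proof
  fix v
  show "c v = restrict forced_color {..<n} v"
  proof (cases "v < n")
    case False
    then show ?thesis using col unfolding is_L_coloring_def extensional_def by simp
  next
    case True
    show ?thesis
    proof (cases "v \<in> \<Union>F")
      case matched: True
      then obtain e where "e \<in> F" "v = Min e \<or> v = Max e" using Union_edges by blast
      then show ?thesis
        using forcing_lists_edge_color[OF assms] forced_color_in_edge Min_in_edge Max_in_edge True
        by auto
    next
      case unmatched: False
      have "c v \<notin> Min ` F"
      proof
        assume "c v \<in> Min ` F"
        then obtain e where e: "e \<in> F" "c v = Min e" by blast
        then have "v \<noteq> Min e" "{v, Min e} \<notin> F" "Min e < n"
          using unmatched Min_in_edge edge_Min_Max(2,3)[OF e(1)] by auto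
        then have "c v \<noteq> c (Min e)"
          using Kn_minus_same_color_imp_edge[OF col True] by blast
        then show False using e forcing_lists_edge_color[OF assms e(1)] by simp
      qed
      moreover have "c v \<in> insert v (Min ` F)"
        using col \<open>forcing_lists L\<close> True unmatched
        unfolding is_L_coloring_def forcing_lists_def by blast
      ultimately show ?thesis using True unmatched forced_color_unmatched by auto
    qed
  qed
qed

lemma forcing_lists_insert_forced_color:
  assumes extra_palette: "\<And>v. v < n \<Longrightarrow> X v \<subseteq> palette - {forced_color v}"
    and extra_edges: "\<And>e. e \<in> F \<Longrightarrow> X (Min e) \<inter> X (Max e) = {}"
    and extra_unmatched: "\<And>v. v < n \<Longrightarrow> v \<notin> \<Union>F \<Longrightarrow> X v \<subseteq> Min ` F"
  shows "forcing_lists (\<lambda>v. insert (forced_color v) (X v))"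
  unfolding forcing_lists_def
proof (intro conjI allI ballI impI)
  fix e assume "e \<in> F"
  then have "forced_color (Min e) = Min e" "forced_color (Max e) = Min e" "Min e < n" "Max e < n"
    using forced_color_in_edge Min_in_edge Max_in_edge edge_Min_Max(2,3)[of e] by auto
  then show "insert (forced_color (Min e)) (X (Min e)) \<inter> insert (forced_color (Max e)) (X (Max e))
      = {Min e}"
    using extra_palette extra_edges[OF \<open>e \<in> F\<close>] by auto
next
  fix v assume "v < n"
  then show "insert (forced_color v) (X v) \<subseteq> palette"
    using extra_palette forced_color_in_palette by blast
  assume "v \<notin> \<Union>F"
  then show "insert (forced_color v) (X v) \<subseteq> insert v (Min ` F)"
    using extra_unmatched[OF \<open>v < n\<close>] forced_color_unmatched by auto
qed simp

lemma extra_colors_exist: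
  assumes "k \<le> card F + 1" "3 * card F < n"
  obtains X where "\<And>v. X v \<subseteq> palette - {forced_color v}" "\<And>v. card (X v) = k - 1"
    and "\<And>e. e \<in> F \<Longrightarrow> X (Min e) \<inter> X (Max e) = {}"
    and "\<And>v. v \<notin> \<Union>F \<Longrightarrow> X v \<subseteq> Min ` F"
proof -
  have "\<exists>A B. A \<subseteq> palette - {Min e} \<and> B \<subseteq> palette - {Min e} \<and> A \<inter> B = {}
      \<and> card A = k - 1 \<and> card B = k - 1" if "e \<in> F" for e
  proof -
    have "2 * (k - 1) \<le> card (palette - {Min e})"
      using card_palette Min_in_palette[OF that] assms by (simp add: palette_def)
    then show ?thesis by (metis obtain_disjoint_subsets_with_card)
  qed
  then obtain A B where AB: "\<And>e. e \<in> F \<Longrightarrow> A e \<subseteq> palette - {Min e} \<and> B e \<subseteq> palette - {Min e}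
      \<and> A e \<inter> B e = {} \<and> card (A e) = k - 1 \<and> card (B e) = k - 1"
    by metis
  have "k - 1 \<le> card (Min ` F)" using card_image[OF inj_on_Min] assms(1) by simp
  then obtain Q where Q: "Q \<subseteq> Min ` F" "card Q = k - 1" by (meson obtain_subset_with_card_n)
  \<comment> \<open>For a matched \<open>v\<close>, \<open>v = forced_color v\<close> holds exactly at the smaller end.\<close>
  define X where "X v =
    (if v \<in> \<Union>F then if v = forced_color v then A (edge_of v) else B (edge_of v) else Q)" for v
  have X_edge: "X (Min e) = A e" "X (Max e) = B e" if "e \<in> F" for e
  proof -
    have "Min e \<noteq> Max e" using edge_Min_Max(2)[OF that] by simp
    then show "X (Min e) = A e" "X (Max e) = B e"
      using that forced_color_in_edge edge_of_eq Min_in_edge Max_in_edge unfolding X_def by auto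
  qed
  have X: "X v \<subseteq> palette - {forced_color v} \<and> card (X v) = k - 1" for v
  proof (cases "v \<in> \<Union>F")
    case True
    then obtain e where e: "e \<in> F" "v = Min e \<or> v = Max e" using Union_edges by blast
    then show ?thesis using AB[OF e(1)] X_edge[OF e(1)] forced_color_in_edge Min_in_edge Max_in_edge
      by auto
  next
    case False
    then have "forced_color v = v" by (rule forced_color_unmatched)
    moreover have "v \<notin> Q" using False Q(1) Min_in_edge by (metis UnionI imageE subsetD)
    moreover have "Q \<subseteq> palette" using Q(1) Min_in_palette by blast
    ultimately show ?thesis using False Q(2) unfolding X_def by auto
  qed
  show thesis
  proof
    show "X v \<subseteq> palette - {forced_color v}" "card (X v) = k - 1" for v using X by blast+
    show "X (Min e) \<inter> X (Max e) = {}" if "e \<in> F" for e using AB[OF that] X_edge[OF that] by simp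
    show "X v \<subseteq> Min ` F" if "v \<notin> \<Union>F" for v using that Q(1) unfolding X_def by simp
  qed
qed

lemma Kn_minus_uniquely_colorable:
  assumes "1 \<le> k" "k \<le> card F + 1" "3 * card F < n"
  shows "uniquely_k_list_colorable {..<n} (Kn_minus n F) k"
proof -
  obtain X where X: "\<And>v. X v \<subseteq> palette - {forced_color v}" "\<And>v. card (X v) = k - 1"
    "\<And>e. e \<in> F \<Longrightarrow> X (Min e) \<inter> X (Max e) = {}" "\<And>v. v \<notin> \<Union>F \<Longrightarrow> X v \<subseteq> Min ` F"
    using extra_colors_exist[OF assms(2,3)] by blast
  define L where "L v = insert (forced_color v) (X v)" for v
  have "finite (X v)" for v using X(1)[of v] finite_subset unfolding palette_def by blast
  then have "k_list_assignment {..<n} k L"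
    using X(1,2) assms(1) unfolding k_list_assignment_def L_def by (simp add: subset_Diff_insert)
  moreover have "forcing_lists L"
    unfolding L_def using X by (intro forcing_lists_insert_forced_color) auto
  then have "\<exists>!c. is_L_coloring {..<n} (Kn_minus n F) L c"
    using forced_color_L_coloring L_coloring_eq_forced_color by blast
  ultimately show ?thesis unfolding uniquely_k_list_colorable_def by blast
qed

end

theorem proposition2p5:
  fixes r n :: nat and F :: "nat set set"
  assumes "n \<ge> 3 * r + 1"
    and "\<forall>e\<in>F. \<exists>u v. u < n \<and> v < n \<and> u \<noteq> v \<and> e = {u, v}"
    and "card F = r" and "finite F"
    and "\<forall>e\<in>F. \<forall>e'\<in>F. e \<noteq> e' \<longrightarrow> e \<inter> e' = {}"
  shows "m_number {..<n} (Kn_minus n F) = r + 2"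
proof -
  interpret Kn_matching n F using assms(2,4,5) by unfold_locales
  have "\<forall>e\<in>F. card e = 2" using assms(2) by auto
  show ?thesis
  proof (rule m_number_eqI)
    show "has_property_M {..<n} (Kn_minus n F) (r + 2)"
      using Kn_minus_has_property_M[OF \<open>\<forall>e\<in>F. card e = 2\<close> assms(4)] assms(1,3) by simp
    show "uniquely_k_list_colorable {..<n} (Kn_minus n F) j" if "1 \<le> j" "j < r + 2" for j
      using Kn_minus_uniquely_colorable that assms(1,3) by simp
  qed simp
qed

end
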